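(* Let $F(d)=1/d^2$. Let $(x_n)_{n\in\mathbb Z}$ and $(y_n)_{n\in\mathbb Z}$ be two uniformly discrete configurations such that $\{x_n: x_n\ge0\}=\{y_n: y_n\ge 0\}=:W$ and such that, in each of the two configurations, every particle located at a point of $W$ is in equilibrium. Then $\{x_n:x_n<0\}=\{y_n:y_n<0\}$.
   Context: A configuration is a strictly increasing bi-infinite sequence $(x_n)_{n\in\mathbb Z}$ of reals; it is uniformly discrete if there are constants $0<c\le C<\infty$ with $c\le x_n-x_{n-1}\le C$ for all $n\in\mathbb Z$. With force law $F$ (here $F(d)=1/d^2$), the particle at $x_n$ is in equilibrium if $\sum_{m<n}F(x_n-x_m)$ and $\sum_{m>n}F(x_m-x_n)$ are both finite and equal. *)

theory Defs
  imports "HOL-Analysis.Analysis"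
begin

definition F :: "real \<Rightarrow> real" where
  "F d = 1 / d\<^sup>2"

definition configuration :: "(int \<Rightarrow> real) \<Rightarrow> bool" where
  "configuration x \<longleftrightarrow> strict_mono x"

definition uniformly_discrete :: "(int \<Rightarrow> real) \<Rightarrow> bool" where
  "uniformly_discrete x \<longleftrightarrow> configuration x \<and>
     (\<exists>c C. 0 < c \<and> c \<le> C \<and> (\<forall>n. c \<le> x n - x (n - 1) \<and> x n - x (n - 1) \<le> C))"

definition in_equilibrium :: "(real \<Rightarrow> real) \<Rightarrow> (int \<Rightarrow> real) \<Rightarrow> int \<Rightarrow> bool" where
  "in_equilibrium G x n \<longleftrightarrow>
     (\<lambda>m. G (x n - x m)) summable_on {..<n} \<and>
     (\<lambda>m. G (x m - x n)) summable_on {n<..} \<and>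
     (\<Sum>\<^sub>\<infinity>m\<in>{..<n}. G (x n - x m)) = (\<Sum>\<^sub>\<infinity>m\<in>{n<..}. G (x m - x n))"

end

theory Submission
  imports Defs "HOL-Complex_Analysis.Complex_Analysis"
begin

text \<open>Write the negative part of a configuration as a decreasing sequence $u_0 > u_1 > \dots$.
  Equilibrium of the particle at $w \in W$ says that $S_u(w) = \sum_j 1/(w - u_j)^2$ equals the
  net pull of $W$ on $w$, which depends on $W$ alone; so the negative parts $u$, $v$ of the two
  configurations satisfy $S_u = S_v$ on $W$. The difference $S_u - S_v$ extends to a bounded
  holomorphic function on a right half-plane, and since $W$ grows at most linearly its zeros on $W$
  violate the Blaschke condition, hence $S_u = S_v$ on a whole half-line. Near $u_0$ the sum
  $S_u$ blows up while $S_v$ stays bounded if $v_0 < u_0$, so $u_0 = v_0$; removing the first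
  particle and repeating gives $u = v$.\<close>

section \<open>Bounded holomorphic functions with many zeros\<close>

lemma blaschke_norm_identity:
  fixes a w :: complex
  shows "cmod (1 - cnj a * w)^2 = cmod (w - a)^2 + (1 - cmod a^2) * (1 - cmod w^2)"
  unfolding cmod_power2 by (simp add: algebra_simps power2_eq_square)

lemma blaschke_norm_bound:
  fixes a w :: complex
  assumes "cmod a < r" "cmod w = r" "r \<le> 1"
  shows "cmod (1 - cnj a * w) \<le> (1 + (1 - r^2) / (r - cmod a)^2) * cmod (w - a)"
proof -
  define K where "K = 1 + (1 - r^2) / (r - cmod a)^2"
  have dist: "r - cmod a \<le> cmod (w - a)"
    using assms norm_triangle_ineq2[of w a] by simp
  have r2: "0 \<le> 1 - r^2" "0 < r - cmod a"
    using assms by (auto simp: abs_square_le_1)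
  have a2: "0 \<le> 1 - cmod a^2" "1 - cmod a^2 \<le> 1"
    using assms by (auto simp: power_le_one)
  have "(1 - cmod a^2) * (1 - r^2) \<le> 1 - r^2"
    using r2 a2 by (simp add: mult_left_le_one_le)
  also have "\<dots> = (1 - r^2) / (r - cmod a)^2 * (r - cmod a)^2"
    using r2 by simp
  also have "\<dots> \<le> (1 - r^2) / (r - cmod a)^2 * cmod (w - a)^2"
    using dist r2 by (intro mult_left_mono power_mono) auto
  finally have "cmod (1 - cnj a * w)^2 \<le> K * cmod (w - a)^2"
    using blaschke_norm_identity[of a w] assms by (simp add: K_def algebra_simps)
  also have "\<dots> \<le> K^2 * cmod (w - a)^2"
  proof -
    have "1 \<le> K" using r2 by (simp add: K_def)
    then show ?thesis by (intro mult_right_mono) (auto simp: power2_eq_square)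
  qed
  also have "\<dots> = (K * cmod (w - a))^2"
    by (simp add: power_mult_distrib)
  finally have "cmod (1 - cnj a * w) \<le> K * cmod (w - a)"
    by (rule power2_le_imp_le) (use r2 in \<open>simp add: K_def\<close>)
  then show ?thesis by (simp add: K_def)
qed

lemma norm_le_of_blaschke_mult_le:
  fixes g :: "complex \<Rightarrow> complex"
  assumes holg: "g holomorphic_on ball 0 1" and a: "cmod a < 1" and M: "0 \<le> M"
    and bnd: "\<And>z. cmod z < 1 \<Longrightarrow> z \<noteq> a \<Longrightarrow>
      cmod (g z) * cmod (z - a) \<le> M * cmod (1 - cnj a * z)"
    and z: "cmod z < 1"
  shows "cmod (g z) \<le> M"
proof -
  define K where "K r = M * (1 + (1 - r^2) / (r - cmod a)^2)" for r :: real
  have le_K: "cmod (g z) \<le> K r" if r: "max (cmod z) (cmod a) < r" "r < 1" for r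
  proof (rule maximum_modulus_frontier[of g "cball 0 r"])
    show "g holomorphic_on interior (cball 0 r)" "continuous_on (closure (cball 0 r)) g"
      using r by (auto intro!: holomorphic_on_imp_continuous_on holomorphic_on_subset[OF holg])
    show "z \<in> cball 0 r" using r by simp
  next
    fix w :: complex assume "w \<in> frontier (cball 0 r)"
    then have w: "cmod w = r" "w \<noteq> a" using r by auto
    have "cmod (g w) * cmod (w - a) \<le> M * cmod (1 - cnj a * w)"
      using bnd[of w] w r by simp
    also have "\<dots> \<le> K r * cmod (w - a)"
      using blaschke_norm_bound[of a r w] w r M by (auto simp: K_def mult.assoc intro: mult_left_mono)
    finally show "cmod (g w) \<le> K r" using w by simp
  qed simp
  have "(K \<longlongrightarrow> K 1) (at_left (1::real))"
    unfolding K_def using a by (intro tendsto_intros) auto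
  moreover have "eventually (\<lambda>r. cmod (g z) \<le> K r) (at_left (1::real))"
  proof -
    have "eventually (\<lambda>r. r \<in> {max (cmod z) (cmod a)<..<1}) (at_left (1::real))"
      using z a by (intro eventually_at_left_real) simp
    then show ?thesis by eventually_elim (use le_K in auto)
  qed
  ultimately have "cmod (g z) \<le> K 1"
    by (intro tendsto_le[OF _ _ tendsto_const]) auto
  then show ?thesis by (simp add: K_def)
qed

text \<open>Dividing out the Blaschke factors of the zeros one at a time.\<close>

lemma norm_at_0_le_prod_zeros:
  fixes f :: "complex \<Rightarrow> complex"
  assumes "finite Z" "Z \<subseteq> ball 0 1 - {0}" "f holomorphic_on ball 0 1"
    and "\<And>z. cmod z < 1 \<Longrightarrow> cmod (f z) \<le> M" and "\<And>z. z \<in> Z \<Longrightarrow> f z = 0"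
  shows "cmod (f 0) \<le> M * (\<Prod>z\<in>Z. cmod z)"
  using assms
proof (induction Z arbitrary: f rule: finite_induct)
  case empty
  then show ?case by simp
next
  case (insert a Z f)
  have a: "cmod a < 1" "a \<noteq> 0" "f a = 0" using insert.prems by auto
  have M: "0 \<le> M" using insert.prems(3)[of 0] by (simp add: order_trans[OF norm_ge_zero])
  define q where "q z = (if z = a then deriv f a else f z / (z - a))" for z
  have "q holomorphic_on ball 0 1"
    by (rule pole_theorem_open_0[OF insert.prems(2), of a q]) (auto simp: q_def a)
  then have holg: "(\<lambda>z. q z * (1 - cnj a * z)) holomorphic_on ball 0 1"
    by (intro holomorphic_intros)
  have "cmod (q z * (1 - cnj a * z)) \<le> M" if "cmod z < 1" for z
  proof (rule norm_le_of_blaschke_mult_le[OF holg a(1) M _ that])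
    fix u assume u: "cmod u < 1" "u \<noteq> a"
    have "cmod (q u * (1 - cnj a * u)) * cmod (u - a) = cmod (f u) * cmod (1 - cnj a * u)"
      using u by (simp add: q_def norm_mult norm_divide)
    also have "\<dots> \<le> M * cmod (1 - cnj a * u)"
      using insert.prems(3)[OF u(1)] by (intro mult_right_mono) auto
    finally show "cmod (q u * (1 - cnj a * u)) * cmod (u - a) \<le> M * cmod (1 - cnj a * u)" .
  qed
  moreover have "q z * (1 - cnj a * z) = 0" if "z \<in> Z" for z
    using insert.hyps insert.prems(4)[of z] that by (auto simp: q_def)
  ultimately have "cmod (q 0) \<le> M * (\<Prod>z\<in>Z. cmod z)"
    using insert.IH[OF _ holg] insert.prems(1) by auto
  then have "cmod a * cmod (q 0) \<le> cmod a * (M * (\<Prod>z\<in>Z. cmod z))"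
    by (rule mult_left_mono) simp
  moreover have "f 0 = - a * q 0" using a by (simp add: q_def)
  ultimately show ?case
    using insert.hyps by (simp add: norm_mult mult_ac)
qed

lemma prod_le_exp_neg_sum_compl:
  fixes a :: "'a \<Rightarrow> real"
  assumes "\<And>k. k \<in> A \<Longrightarrow> 0 \<le> a k"
  shows "(\<Prod>k\<in>A. a k) \<le> exp (- (\<Sum>k\<in>A. 1 - a k))"
proof (cases "finite A")
  case True
  have "(\<Prod>k\<in>A. a k) \<le> (\<Prod>k\<in>A. exp (a k - 1))"
    using assms by (intro prod_mono) (auto intro: order_trans[OF _ exp_ge_add_one_self])
  also have "\<dots> = exp (- (\<Sum>k\<in>A. 1 - a k))"
    using True by (simp add: exp_sum[symmetric] sum_negf[symmetric])
  finally show ?thesis .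
qed simp

lemma bounded_holomorphic_zero_at_0_if_not_blaschke:
  fixes f :: "complex \<Rightarrow> complex" and zs :: "nat \<Rightarrow> complex"
  assumes holf: "f holomorphic_on ball 0 1" and bnd: "\<And>z. cmod z < 1 \<Longrightarrow> cmod (f z) \<le> M"
    and zs: "\<And>k. zs k \<in> ball 0 1 - {0}" "inj zs" "\<And>k. f (zs k) = 0"
    and not_blaschke: "\<not> summable (\<lambda>k. 1 - cmod (zs k))"
  shows "f 0 = 0"
proof (rule ccontr)
  assume "f 0 \<noteq> 0"
  then have f0: "0 < cmod (f 0)" by simp
  moreover have "cmod (f 0) \<le> M" using bnd[of 0] by simp
  ultimately have M: "0 < M" by linarith
  have "(\<Sum>k<n. 1 - cmod (zs k)) \<le> ln (M / cmod (f 0))" for n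
  proof -
    have "cmod (f 0) \<le> M * (\<Prod>z\<in>zs ` {..<n}. cmod z)"
      by (rule norm_at_0_le_prod_zeros[OF _ _ holf bnd]) (use zs in auto)
    also have "\<dots> = M * (\<Prod>k<n. cmod (zs k))"
      using zs(2) by (simp add: prod.reindex inj_on_subset)
    also have "\<dots> \<le> M * exp (- (\<Sum>k<n. 1 - cmod (zs k)))"
      using M by (intro mult_left_mono prod_le_exp_neg_sum_compl) auto
    finally have "ln (cmod (f 0)) \<le> ln M - (\<Sum>k<n. 1 - cmod (zs k))"
      using f0 M by (auto simp: ln_mult ln_le_cancel_iff[symmetric])
    then show ?thesis
      using f0 M by (simp add: ln_div)
  qed
  then have "summable (\<lambda>k. 1 - cmod (zs k))"
    by (intro summableI_nonneg_bounded) (use zs(1) in \<open>auto simp: less_imp_le\<close>)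
  with not_blaschke show False by simp
qed

lemma Re_cayley_pos:
  fixes z :: complex
  assumes "cmod z < 1"
  shows "0 < Re ((1 + z) / (1 - z))"
proof -
  have "cmod z ^ 2 < 1" using assms by (simp add: power_less_one_iff)
  then have "Re z ^ 2 + Im z ^ 2 < 1" by (simp add: cmod_power2)
  then have "0 < (1 + Re z) * (1 - Re z) + Im z * (- Im z)"
    by (simp add: algebra_simps power2_eq_square)
  moreover have "0 < cmod (1 - z)^2" using assms by auto
  ultimately have "0 < ((1 + Re z) * (1 - Re z) + Im z * (- Im z)) / cmod (1 - z)^2"
    by (rule divide_pos_pos)
  then show ?thesis by (simp only: Re_divide) (simp add: cmod_power2)
qed

lemma cayley_inverse_real:
  fixes r t :: real
  assumes "0 < r" "0 < t"
  shows "r * ((1 + (t - r) / (t + r)) / (1 - (t - r) / (t + r))) = t"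
    and "1 - \<bar>(t - r) / (t + r)\<bar> = 2 * min t r / (t + r)"
proof -
  have p: "0 < t + r" using assms by simp
  have "1 + (t - r) / (t + r) = 2 * t / (t + r)" "1 - (t - r) / (t + r) = 2 * r / (t + r)"
    using p by (simp_all add: field_simps)
  then show "r * ((1 + (t - r) / (t + r)) / (1 - (t - r) / (t + r))) = t"
    using p assms by simp
  show "1 - \<bar>(t - r) / (t + r)\<bar> = 2 * min t r / (t + r)"
  proof -
    have "t + r - \<bar>t - r\<bar> = 2 * min t r" by (simp add: min_def abs_if)
    then show ?thesis using p by (simp add: field_simps)
  qed
qed

lemma not_summable_inverse_linear_bound:
  fixes a :: "nat \<Rightarrow> real"
  assumes pos: "\<And>k. 0 < a k" and le: "\<And>k. a k \<le> B * real (Suc k)"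
  shows "\<not> summable (\<lambda>k. 1 / a k)"
proof
  assume sum: "summable (\<lambda>k. 1 / a k)"
  have B: "0 < B" using pos[of 0] le[of 0] by simp
  have "norm (1 / (B * real (Suc k))) \<le> 1 / a k" for k
  proof -
    have "0 < B * real (Suc k)" using B by simp
    then show ?thesis using pos[of k] le[of k] by (simp add: frac_le)
  qed
  then have "summable (\<lambda>k. 1 / (B * real (Suc k)))"
    by (rule summable_comparison_test'[OF sum])
  then have "summable (\<lambda>k. B * (1 / (B * real (Suc k))))"
    by (rule summable_mult)
  then have "summable (\<lambda>k. inverse (real (Suc k)))"
    using B by (simp add: divide_inverse)
  then show False
    using not_summable_harmonic[where 'a = real] summable_Suc_iff[of "\<lambda>k. inverse (real k)"] by simp
qed

lemma not_summable_cayley_compl: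
  fixes w :: "nat \<Rightarrow> real"
  assumes w: "strict_mono w" "0 < w 0" "\<And>k. w (Suc k) \<le> w k + C" and r: "0 < r"
  shows "\<not> summable (\<lambda>k. 1 - \<bar>(w k - r) / (w k + r)\<bar>)"
proof -
  define m where "m = 2 * min (w 0) r"
  have m: "0 < m" using w(2) r by (simp add: m_def)
  have w0_le: "w 0 \<le> w k" for k using w(1) by (simp add: strict_mono_less_eq)
  have w_le: "w k \<le> w 0 + real k * C" for k
  proof (induction k)
    case (Suc k)
    then show ?case using w(3)[of k] by (simp add: algebra_simps)
  qed simp
  have C: "0 \<le> C" using strict_monoD[OF w(1), of 0 1] w(3)[of 0] by simp
  have "\<not> summable (\<lambda>k. 1 / ((w k + r) / (2 * min (w k) r)))"
  proof (rule not_summable_inverse_linear_bound)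
    fix k
    have pos: "0 < w k" using w(2) w0_le[of k] by linarith
    then show "0 < (w k + r) / (2 * min (w k) r)" using r by simp
    have "m \<le> 2 * min (w k) r" using w0_le[of k] by (simp add: m_def)
    then have "(w k + r) / (2 * min (w k) r) \<le> (w k + r) / m"
      using m pos r by (intro divide_left_mono) auto
    also have "\<dots> \<le> (w 0 + r + C) * real (Suc k) / m"
    proof (rule divide_right_mono)
      have "w 0 + r + real k * C \<le> (w 0 + r) * real (Suc k) + real k * C"
        using w(2) r by (simp add: algebra_simps)
      then show "w k + r \<le> (w 0 + r + C) * real (Suc k)"
        using w_le[of k] C by (simp add: algebra_simps)
    qed (use m in simp)
    finally show "(w k + r) / (2 * min (w k) r) \<le> (w 0 + r + C) / m * real (Suc k)"
      by simp
  qed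
  moreover have "1 - \<bar>(w k - r) / (w k + r)\<bar> = 1 / ((w k + r) / (2 * min (w k) r))" for k
    using cayley_inverse_real(2)[OF r, of "w k"] w(2) w0_le[of k] by simp
  ultimately show ?thesis by simp
qed

text \<open>The zeros $w_k$ grow at most linearly, so the Cayley transform $z \mapsto r (1+z)/(1-z)$
  turns them into a non-Blaschke sequence of the disc.\<close>

lemma bounded_holomorphic_halfplane_zero:
  fixes f :: "complex \<Rightarrow> complex" and w :: "nat \<Rightarrow> real"
  assumes holf: "f holomorphic_on {s. 0 < Re s}"
    and bnd: "\<And>s. 0 < Re s \<Longrightarrow> cmod (f s) \<le> M"
    and w: "strict_mono w" "0 < w 0" "\<And>k. w (Suc k) \<le> w k + C"
    and zeros: "\<And>k. f (of_real (w k)) = 0"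
    and r: "0 < r"
  shows "f (of_real r) = 0"
proof (cases "r \<in> range w")
  case False
  define \<phi> where "\<phi> z = of_real r * ((1 + z) / (1 - z))" for z :: complex
  define zs where "zs k = complex_of_real ((w k - r) / (w k + r))" for k
  have w_pos: "0 < w k" for k
    using w(1,2) by (metis le0 less_le_trans strict_mono_less_eq)
  have \<phi>_in: "0 < Re (\<phi> z)" if "cmod z < 1" for z
  proof -
    have "Re (\<phi> z) = r * Re ((1 + z) / (1 - z))"
      by (simp only: \<phi>_def times_complex.sel Re_complex_of_real Im_complex_of_real
          mult_zero_left diff_zero)
    then show ?thesis using Re_cayley_pos[OF that] r by simp
  qed
  have "(f \<circ> \<phi>) holomorphic_on ball 0 1"
  proof (rule holomorphic_on_compose_gen[OF _ holf])
    show "\<phi> holomorphic_on ball 0 1" unfolding \<phi>_def by (intro holomorphic_intros) auto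
    show "\<phi> ` ball 0 1 \<subseteq> {s. 0 < Re s}" using \<phi>_in by auto
  qed
  moreover have "cmod ((f \<circ> \<phi>) z) \<le> M" if "cmod z < 1" for z
    using bnd[OF \<phi>_in[OF that]] by simp
  moreover have "zs k \<in> ball 0 1 - {0}" for k
  proof -
    have "0 < 1 - \<bar>(w k - r) / (w k + r)\<bar>"
      using cayley_inverse_real(2)[OF r w_pos[of k]] w_pos[of k] r by simp
    moreover have "w k \<noteq> r" using False by auto
    moreover have "cmod (zs k) = \<bar>(w k - r) / (w k + r)\<bar>"
      by (simp only: zs_def norm_of_real)
    ultimately show ?thesis
      using w_pos[of k] r by (simp add: zs_def del: of_real_divide of_real_diff of_real_add)
  qed
  moreover have "inj zs"
  proof (rule injI)
    fix k l assume "zs k = zs l"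
    then have "(w k - r) / (w k + r) = (w l - r) / (w l + r)"
      unfolding zs_def of_real_eq_iff .
    then have "w k = w l" using w_pos[of k] w_pos[of l] r by (simp add: field_simps)
    then show "k = l" using strict_mono_eq[OF w(1)] by simp
  qed
  moreover have "(f \<circ> \<phi>) (zs k) = 0" for k
  proof -
    have "\<phi> (zs k) = of_real (r * ((1 + (w k - r) / (w k + r)) / (1 - (w k - r) / (w k + r))))"
      by (simp add: \<phi>_def zs_def)
    also have "\<dots> = of_real (w k)"
      by (simp only: cayley_inverse_real(1)[OF r w_pos[of k]])
    finally show ?thesis using zeros[of k] by simp
  qed
  moreover have "\<not> summable (\<lambda>k. 1 - cmod (zs k))"
    using not_summable_cayley_compl[of w, OF w r] unfolding zs_def norm_of_real .
  ultimately have "(f \<circ> \<phi>) 0 = 0"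
    by (rule bounded_holomorphic_zero_at_0_if_not_blaschke)
  then show ?thesis by (simp add: \<phi>_def)
qed (use zeros in auto)

section \<open>Inverse-square sums over separated sequences\<close>

definition decreasing_by :: "real \<Rightarrow> (nat \<Rightarrow> real) \<Rightarrow> bool" where
  "decreasing_by c u \<longleftrightarrow> 0 < c \<and> (\<forall>j. u (Suc j) + c \<le> u j)"

definition inv_sq_sum :: "(nat \<Rightarrow> real) \<Rightarrow> real \<Rightarrow> real" where
  "inv_sq_sum u t = (\<Sum>j. 1 / (t - u j)^2)"

definition cinv_sq_sum :: "(nat \<Rightarrow> real) \<Rightarrow> complex \<Rightarrow> complex" where
  "cinv_sq_sum u s = (\<Sum>j. 1 / (s - of_real (u j))^2)"

lemma decreasing_by_le:
  assumes "decreasing_by c u"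
  shows "u j + real j * c \<le> u 0"
proof (induction j)
  case (Suc j)
  then show ?case using assms by (auto simp: decreasing_by_def algebra_simps dest: spec[of _ j])
qed simp

lemma decreasing_by_le_head: "decreasing_by c u \<Longrightarrow> u j \<le> u 0"
  using decreasing_by_le[of c u j] by (auto simp: decreasing_by_def intro: order_trans[rotated])

lemma decreasing_by_Suc: "decreasing_by c u \<Longrightarrow> decreasing_by c (\<lambda>j. u (Suc j))"
  by (simp add: decreasing_by_def)

lemma inv_sq_sum_term_le:
  assumes u: "decreasing_by c u" and t: "u 0 < t"
  shows "1 / (t - u j)^2 \<le> inverse ((min (t - u 0) c)^2) * inverse (real (Suc j) ^ 2)"
proof -
  define m where "m = min (t - u 0) c"
  have m: "0 < m" using u t by (simp add: m_def decreasing_by_def)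
  have "m * real (Suc j) = m + real j * m" by (simp add: algebra_simps)
  also have "\<dots> \<le> (t - u 0) + real j * c"
    by (intro add_mono mult_left_mono) (auto simp: m_def)
  also have "\<dots> \<le> t - u j" using decreasing_by_le[OF u, of j] by simp
  finally have "(m * real (Suc j))^2 \<le> (t - u j)^2"
    using m by (intro power_mono) auto
  then have "1 / (t - u j)^2 \<le> 1 / (m * real (Suc j))^2"
    using m by (intro frac_le) auto
  then show ?thesis by (simp add: m_def power_mult_distrib divide_inverse)
qed

lemma summable_inv_sq_sum:
  assumes u: "decreasing_by c u" and t: "u 0 < t"
  shows "summable (\<lambda>j. 1 / (t - u j)^2)"
proof (rule summable_comparison_test'[where N = 0])
  have "summable (\<lambda>j. inverse (real (Suc j) ^ 2))"
    using summable_Suc_iff[of "\<lambda>n. inverse (real n ^ 2)"]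
      inverse_power_summable[of 2, where 'a = real] by simp
  then show "summable (\<lambda>j. inverse ((min (t - u 0) c)^2) * inverse (real (Suc j) ^ 2))"
    by (rule summable_mult)
qed (use inv_sq_sum_term_le[OF u t] in simp)

lemma has_sum_inv_sq_sum:
  assumes "decreasing_by c u" "u 0 < t"
  shows "((\<lambda>j. 1 / (t - u j)^2) has_sum inv_sq_sum u t) UNIV"
  unfolding inv_sq_sum_def
  by (rule sums_nonneg_imp_has_sum[OF summable_sums[OF summable_inv_sq_sum[OF assms]]]) simp

lemma norm_cinv_sq_sum_term_le:
  assumes u: "decreasing_by c u" and p: "u 0 < p" and s: "p \<le> Re s"
  shows "cmod (1 / (s - of_real (u j))^2) \<le> 1 / (p - u j)^2"
proof -
  have pos: "0 < p - u j" using p decreasing_by_le_head[OF u, of j] by simp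
  have "p - u j \<le> Re (s - of_real (u j))" using s by simp
  also have "\<dots> \<le> cmod (s - of_real (u j))" by (rule complex_Re_le_cmod)
  finally have "(p - u j)^2 \<le> cmod (s - of_real (u j))^2"
    using pos by (intro power_mono) auto
  then show ?thesis
    using pos by (simp add: norm_divide norm_power frac_le)
qed

lemma norm_cinv_sq_sum_le:
  assumes "decreasing_by c u" "u 0 < p" "p \<le> Re s"
  shows "cmod (cinv_sq_sum u s) \<le> inv_sq_sum u p"
  unfolding cinv_sq_sum_def inv_sq_sum_def
  by (rule norm_suminf_le[OF norm_cinv_sq_sum_term_le[OF assms] summable_inv_sq_sum[OF assms(1,2)]])

lemma cinv_sq_sum_of_real:
  assumes "decreasing_by c u" "u 0 < t"
  shows "cinv_sq_sum u (of_real t) = of_real (inv_sq_sum u t)"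
  using suminf_of_real[OF summable_inv_sq_sum[OF assms], where 'a = complex]
  by (simp add: cinv_sq_sum_def inv_sq_sum_def)

lemma cinv_sq_sum_holomorphic:
  assumes u: "decreasing_by c u"
  shows "cinv_sq_sum u holomorphic_on {s. u 0 < Re s}"
proof -
  have "(\<lambda>s. \<Sum>j. 1 / (s - of_real (u j))^2) holomorphic_on {s. u 0 < Re s}"
  proof (rule holomorphic_uniform_sequence[where f = "\<lambda>n s. \<Sum>j<n. 1 / (s - of_real (u j))^2"])
    fix n
    show "(\<lambda>s. \<Sum>j<n. 1 / (s - of_real (u j))^2) holomorphic_on {s. u 0 < Re s}"
    proof (intro holomorphic_intros)
      fix j s assume "s \<in> {s. u 0 < Re s}"
      then show "(s - of_real (u j))^2 \<noteq> 0" using decreasing_by_le_head[OF u, of j] by auto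
    qed
  next
    fix x assume "x \<in> {s. u 0 < Re s}"
    define d where "d = (Re x - u 0) / 2"
    have d: "0 < d" using \<open>x \<in> _\<close> by (simp add: d_def)
    have near: "u 0 + d \<le> Re y" if "y \<in> cball x d" for y
      using that abs_Re_le_cmod[of "x - y"] by (simp add: d_def dist_norm abs_le_iff field_simps)
    have "uniform_limit (cball x d) (\<lambda>n s. \<Sum>j<n. 1 / (s - of_real (u j))^2)
            (\<lambda>s. \<Sum>j. 1 / (s - of_real (u j))^2) sequentially"
    proof (rule Weierstrass_m_test)
      show "summable (\<lambda>j. 1 / (u 0 + d - u j)^2)" using d by (intro summable_inv_sq_sum[OF u]) simp
    qed (use d near in \<open>intro norm_cinv_sq_sum_term_le[OF u], auto\<close>)
    moreover have "cball x d \<subseteq> {s. u 0 < Re s}"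
      using d near by fastforce
    ultimately show "\<exists>d>0. cball x d \<subseteq> {s. u 0 < Re s} \<and>
        uniform_limit (cball x d) (\<lambda>n s. \<Sum>j<n. 1 / (s - of_real (u j))^2)
          (\<lambda>s. \<Sum>j. 1 / (s - of_real (u j))^2) sequentially"
      using d by blast
  qed (simp add: open_halfspace_Re_gt)
  then show ?thesis by (simp add: cinv_sq_sum_def[abs_def])
qed

lemma inv_sq_sum_head_le:
  assumes "decreasing_by c u" "u 0 < t"
  shows "1 / (t - u 0)^2 \<le> inv_sq_sum u t"
  unfolding inv_sq_sum_def
  using sum_le_suminf[OF summable_inv_sq_sum[OF assms], of "{0}"] by simp

lemma inv_sq_sum_nonneg:
  assumes "decreasing_by c u" "u 0 < t"
  shows "0 \<le> inv_sq_sum u t"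
  unfolding inv_sq_sum_def by (rule suminf_nonneg[OF summable_inv_sq_sum[OF assms]]) simp

lemma inv_sq_sum_antimono:
  assumes u: "decreasing_by c u" and t: "u 0 < t1" "t1 \<le> t2"
  shows "inv_sq_sum u t2 \<le> inv_sq_sum u t1"
  unfolding inv_sq_sum_def
proof (rule suminf_le)
  show "summable (\<lambda>j. 1 / (t2 - u j)^2)" "summable (\<lambda>j. 1 / (t1 - u j)^2)"
    using t by (auto intro: summable_inv_sq_sum[OF u])
  fix j
  have "0 < t1 - u j" using t decreasing_by_le_head[OF u, of j] by simp
  then show "1 / (t2 - u j)^2 \<le> 1 / (t1 - u j)^2"
    using t by (intro divide_left_mono power_mono mult_pos_pos) auto
qed

lemma inv_sq_sum_Suc:
  assumes "decreasing_by c u" "u 0 < t"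
  shows "inv_sq_sum (\<lambda>j. u (Suc j)) t = inv_sq_sum u t - 1 / (t - u 0)^2"
  unfolding inv_sq_sum_def by (rule suminf_split_head[OF summable_inv_sq_sum[OF assms]])

lemma holomorphic_on_shift_halfplane:
  assumes "h holomorphic_on {s. q < Re s}" "q \<le> p"
  shows "(\<lambda>s. h (s + of_real p)) holomorphic_on {s. 0 < Re s}"
proof -
  have "(h \<circ> (\<lambda>s. s + of_real p)) holomorphic_on {s. 0 < Re s}"
    by (rule holomorphic_on_compose_gen[OF _ assms(1)])
      (use assms(2) in \<open>auto intro!: holomorphic_intros\<close>)
  then show ?thesis by (simp add: o_def)
qed

text \<open>The difference of the complexified sums, shifted to the half-plane, is bounded and
  holomorphic and vanishes at the points $w_k$.\<close>

lemma inv_sq_sum_eq_on_halfline: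
  assumes u: "decreasing_by cu u" and v: "decreasing_by cv v" and neg: "u 0 < 0" "v 0 < 0"
    and w: "strict_mono w" "0 \<le> w 0" "\<And>k. w (Suc k) \<le> w k + C"
    and eq: "\<And>k. inv_sq_sum u (w k) = inv_sq_sum v (w k)"
    and t: "max (u 0) (v 0) < t"
  shows "inv_sq_sum u t = inv_sq_sum v t"
proof -
  define p where "p = (max (u 0) (v 0) + min t 0) / 2"
  have p: "u 0 < p" "v 0 < p" "p < t" "p < 0" using t neg by (auto simp: p_def)
  define g where "g s = cinv_sq_sum u (s + of_real p) - cinv_sq_sum v (s + of_real p)" for s
  have hol: "g holomorphic_on {s. 0 < Re s}"
    unfolding g_def using p
    by (intro holomorphic_intros holomorphic_on_shift_halfplane[OF cinv_sq_sum_holomorphic[OF u]]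
        holomorphic_on_shift_halfplane[OF cinv_sq_sum_holomorphic[OF v]]) auto
  have bnd: "cmod (g s) \<le> inv_sq_sum u p + inv_sq_sum v p" if "0 < Re s" for s
  proof -
    have "cmod (g s) \<le> cmod (cinv_sq_sum u (s + of_real p)) + cmod (cinv_sq_sum v (s + of_real p))"
      unfolding g_def by (rule norm_triangle_ineq4)
    also have "\<dots> \<le> inv_sq_sum u p + inv_sq_sum v p"
      using that p by (intro add_mono norm_cinv_sq_sum_le[OF u] norm_cinv_sq_sum_le[OF v]) auto
    finally show ?thesis .
  qed
  have mono: "strict_mono (\<lambda>k. w k - p)" using w(1) by (simp add: strict_mono_def)
  have zeros: "g (of_real (w k - p)) = 0" for k
  proof -
    have "u 0 < w k" "v 0 < w k"
      using neg w(1,2) strict_mono_less_eq[OF w(1), of 0 k] by auto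
    then show ?thesis
      using eq[of k] by (simp add: g_def cinv_sq_sum_of_real[OF u] cinv_sq_sum_of_real[OF v])
  qed
  have "g (of_real (t - p)) = 0"
    by (rule bounded_holomorphic_halfplane_zero[OF hol bnd mono _ _ zeros]) (use w(2,3) p in auto)
  then show ?thesis
    using p by (simp add: g_def cinv_sq_sum_of_real[OF u] cinv_sq_sum_of_real[OF v])
qed

text \<open>The sum for $u$ blows up at $u_0$, while that for $v$ stays bounded there.\<close>

lemma inv_sq_sum_gt_near_head:
  assumes u: "decreasing_by cu u" and v: "decreasing_by cv v" and vu: "v 0 < u 0"
  shows "\<exists>t > u 0. inv_sq_sum v t < inv_sq_sum u t"
proof -
  define R where "R = inv_sq_sum v (u 0)"
  have R: "0 \<le> R" unfolding R_def by (rule inv_sq_sum_nonneg[OF v vu])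
  define t where "t = u 0 + 1 / (R + 1)"
  have t: "u 0 < t" using R by (simp add: t_def)
  have "inv_sq_sum v t \<le> R"
    unfolding R_def using inv_sq_sum_antimono[OF v vu] t by simp
  also have "\<dots> < (R + 1)^2"
    using R by (simp add: power2_eq_square algebra_simps add_pos_nonneg)
  also have "\<dots> = 1 / (t - u 0)^2" using R by (simp add: t_def power_divide)
  also have "\<dots> \<le> inv_sq_sum u t" by (rule inv_sq_sum_head_le[OF u t])
  finally show ?thesis using t by blast
qed

lemma inv_sq_sum_eq_imp_head_eq:
  assumes u: "decreasing_by cu u" and v: "decreasing_by cv v"
    and eq: "\<And>t. max (u 0) (v 0) < t \<Longrightarrow> inv_sq_sum u t = inv_sq_sum v t"
  shows "u 0 = v 0"
proof (rule linorder_cases[of "u 0" "v 0"])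
  assume "u 0 < v 0"
  then obtain t where "v 0 < t" "inv_sq_sum u t < inv_sq_sum v t"
    using inv_sq_sum_gt_near_head[OF v u] by blast
  with eq[of t] \<open>u 0 < v 0\<close> show ?thesis by simp
next
  assume "v 0 < u 0"
  then obtain t where "u 0 < t" "inv_sq_sum v t < inv_sq_sum u t"
    using inv_sq_sum_gt_near_head[OF u v] by blast
  with eq[of t] \<open>v 0 < u 0\<close> show ?thesis by simp
qed

lemma inv_sq_sum_eq_at_points_imp_head_eq:
  assumes u: "decreasing_by cu u" and v: "decreasing_by cv v" and neg: "u 0 < 0" "v 0 < 0"
    and w: "strict_mono w" "0 \<le> w 0" "\<And>k. w (Suc k) \<le> w k + C"
    and eq: "\<And>k. inv_sq_sum u (w k) = inv_sq_sum v (w k)"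
  shows "u 0 = v 0"
  using inv_sq_sum_eq_on_halfline[where w = w, OF u v neg w eq]
  by (rule inv_sq_sum_eq_imp_head_eq[OF u v])

text \<open>Once the heads agree, removing them keeps the sums equal at the $w_k$, so the
  argument repeats.\<close>

lemma inv_sq_sum_eq_imp_eq:
  assumes u: "decreasing_by cu u" and v: "decreasing_by cv v" and neg: "u 0 < 0" "v 0 < 0"
    and w: "strict_mono w" "0 \<le> w 0" "\<And>k. w (Suc k) \<le> w k + C"
    and eq: "\<And>k. inv_sq_sum u (w k) = inv_sq_sum v (w k)"
  shows "u = v"
proof
  fix j show "u j = v j"
    using u v neg eq
  proof (induction j arbitrary: u v)
    case 0
    then show ?case by (rule inv_sq_sum_eq_at_points_imp_head_eq[where w = w, OF _ _ _ _ w])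
  next
    case (Suc j u v)
    have head: "u 0 = v 0"
      by (rule inv_sq_sum_eq_at_points_imp_head_eq[where w = w, OF Suc.prems(1-4) w Suc.prems(5)])
    have tail_neg: "u 1 < 0" "v 1 < 0"
      using Suc.prems(1-4) by (auto simp: decreasing_by_def dest: spec[of _ 0])
    have "inv_sq_sum (\<lambda>j. u (Suc j)) (w k) = inv_sq_sum (\<lambda>j. v (Suc j)) (w k)" for k
    proof -
      have "u 0 < w k" "v 0 < w k"
        using Suc.prems(3,4) w(2) strict_mono_less_eq[OF w(1), of 0 k] by auto
      then show ?thesis
        using Suc.prems(5)[of k] head
        by (simp add: inv_sq_sum_Suc[OF Suc.prems(1)] inv_sq_sum_Suc[OF Suc.prems(2)])
    qed
    then show ?case
      using Suc.IH[OF decreasing_by_Suc[OF Suc.prems(1)] decreasing_by_Suc[OF Suc.prems(2)]] tail_neg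
      by simp
  qed
qed

section \<open>Configurations in equilibrium\<close>

lemma strict_mono_int_threshold:
  fixes x :: "int \<Rightarrow> 'a :: linorder"
  assumes mono: "strict_mono x" and below: "x b < a" and above: "a \<le> x m"
  obtains N where "\<And>n. a \<le> x n \<longleftrightarrow> N \<le> n"
proof -
  define P where "P k \<longleftrightarrow> a \<le> x (b + int k)" for k :: nat
  have "b < m" using below above mono by (metis le_less_trans not_le strict_mono_less_eq)
  then have "P (nat (m - b))" using above by (simp add: P_def)
  then have least: "P (LEAST k. P k)" by (rule LeastI)
  define N where "N = b + int (LEAST k. P k)"
  have "(LEAST k. P k) \<noteq> 0" using least below by (metis P_def add_0_right leD of_nat_0)
  then have not_P: "\<not> a \<le> x (N - 1)"
    using not_less_Least[of "(LEAST k. P k) - 1" P] by (simp add: P_def N_def algebra_simps)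
  have "a \<le> x n \<longleftrightarrow> N \<le> n" for n
  proof
    assume "a \<le> x n"
    then show "N \<le> n"
      using not_P mono by (metis order.trans linorder_not_le strict_mono_less_eq zle_diff1_eq)
  next
    assume "N \<le> n"
    then show "a \<le> x n"
      using least mono by (auto simp: P_def N_def strict_mono_less_eq intro: order.trans)
  qed
  then show ?thesis by (rule that)
qed

lemma gap_lower_bound:
  fixes x :: "int \<Rightarrow> real"
  assumes gap: "\<And>n. c \<le> x n - x (n - 1)" and "m \<le> n"
  shows "x m + of_int (n - m) * c \<le> x n"
  using \<open>m \<le> n\<close>
proof (induction n rule: int_ge_induct)
  case (step i)
  then show ?case using gap[of "i + 1"] by (simp add: algebra_simps)
qed simp

lemma uniformly_discrete_threshold:
  assumes "uniformly_discrete x"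
  obtains N where "\<And>n. 0 \<le> x n \<longleftrightarrow> N \<le> n"
proof -
  obtain c where mono: "strict_mono x" and c: "0 < c" and gap: "\<And>n. c \<le> x n - x (n - 1)"
    using assms by (auto simp: uniformly_discrete_def configuration_def)
  obtain k :: nat where k: "\<bar>x 0\<bar> < real k * c" using reals_Archimedean3[OF c] by blast
  have "x (- int k) + real k * c \<le> x 0" "x 0 + real k * c \<le> x (int k)"
    using gap_lower_bound[of c x, OF gap, of "- int k" 0] gap_lower_bound[of c x, OF gap, of 0 "int k"]
    by auto
  then have "x (- int k) < 0" "0 \<le> x (int k)" using k by auto
  then show ?thesis using strict_mono_int_threshold[OF mono] that by blast
qed

lemma negative_part_eq_range:
  fixes x :: "int \<Rightarrow> real"
  assumes N: "\<And>n. 0 \<le> x n \<longleftrightarrow> N \<le> n"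
  shows "{r. \<exists>n. r = x n \<and> x n < 0} = range (\<lambda>j. x (N - 1 - int j))"
proof (intro set_eqI iffI)
  fix r assume "r \<in> {r. \<exists>n. r = x n \<and> x n < 0}"
  then obtain n where "r = x n" "n < N" using N by (auto simp: not_le[symmetric])
  then show "r \<in> range (\<lambda>j. x (N - 1 - int j))"
    by (intro range_eqI[of _ _ "nat (N - 1 - n)"]) simp
qed (use N in \<open>auto simp: not_le[symmetric]\<close>)

lemma nonnegative_part_eq_image:
  fixes x :: "int \<Rightarrow> real"
  assumes "\<And>n. 0 \<le> x n \<longleftrightarrow> N \<le> n"
  shows "{r. \<exists>n. r = x n \<and> x n \<ge> 0} = x ` {N..}"
  using assms by auto

lemma decreasing_by_negative_part:
  fixes x :: "int \<Rightarrow> real"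
  assumes "0 < c" "\<And>n. c \<le> x n - x (n - 1)"
  shows "decreasing_by c (\<lambda>j. x (N - 1 - int j))"
  unfolding decreasing_by_def
proof (intro conjI allI)
  fix j
  show "x (N - 1 - int (Suc j)) + c \<le> x (N - 1 - int j)"
    using assms(2)[of "N - 1 - int j"] by (simp add: algebra_simps)
qed (rule assms(1))

lemma infsum_negative_part_eq_inv_sq_sum:
  fixes x :: "int \<Rightarrow> real"
  assumes u: "decreasing_by c (\<lambda>j. x (N - 1 - int j))" and t: "x (N - 1) < t"
  shows "(\<Sum>\<^sub>\<infinity>m\<in>{..<N}. F (t - x m)) = inv_sq_sum (\<lambda>j. x (N - 1 - int j)) t"
proof -
  have "bij_betw (\<lambda>j. N - 1 - int j) UNIV {..<N}"
    by (rule bij_betwI[where g = "\<lambda>m. nat (N - 1 - m)"]) auto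
  then have "(\<Sum>\<^sub>\<infinity>m\<in>{..<N}. F (t - x m)) = (\<Sum>\<^sub>\<infinity>j. F (t - x (N - 1 - int j)))"
    by (rule infsum_reindex_bij_betw[symmetric])
  also have "\<dots> = inv_sq_sum (\<lambda>j. x (N - 1 - int j)) t"
    using has_sum_inv_sq_sum[OF u] t by (simp add: F_def infsumI)
  finally show ?thesis .
qed

definition net_pull :: "real set \<Rightarrow> real \<Rightarrow> real" where
  "net_pull W r = (\<Sum>\<^sub>\<infinity>s\<in>{s\<in>W. r < s}. F (s - r)) - (\<Sum>s\<in>{s\<in>W. s < r}. F (r - s))"

text \<open>In equilibrium the pull of the negative part to the left balances the net pull of the
  nonnegative part, so the pull of the negative part on points of $W$ depends on $W$ alone.\<close>

lemma equilibrium_imp_inv_sq_sum_eq_net_pull: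
  fixes x :: "int \<Rightarrow> real"
  assumes mono: "strict_mono x" and N: "\<And>n. 0 \<le> x n \<longleftrightarrow> N \<le> n"
    and u: "decreasing_by c (\<lambda>j. x (N - 1 - int j))"
    and n: "N \<le> n" and eq: "in_equilibrium F x n"
  shows "inv_sq_sum (\<lambda>j. x (N - 1 - int j)) (x n) = net_pull (x ` {N..}) (x n)"
proof -
  have inj: "inj_on x A" for A using mono by (simp add: strict_mono_imp_inj_on inj_on_subset)
  have left: "(\<lambda>m. F (x n - x m)) summable_on {..<n}"
    and sum_eq: "(\<Sum>\<^sub>\<infinity>m\<in>{..<n}. F (x n - x m)) = (\<Sum>\<^sub>\<infinity>m\<in>{n<..}. F (x m - x n))"
    using eq by (auto simp: in_equilibrium_def)
  have "(\<lambda>m. F (x n - x m)) summable_on {..<N}" "(\<lambda>m. F (x n - x m)) summable_on {N..<n}"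
    using n by (auto intro: summable_on_subset[OF left])
  then have "(\<Sum>\<^sub>\<infinity>m\<in>{..<N} \<union> {N..<n}. F (x n - x m))
      = (\<Sum>\<^sub>\<infinity>m\<in>{..<N}. F (x n - x m)) + (\<Sum>\<^sub>\<infinity>m\<in>{N..<n}. F (x n - x m))"
    by (rule infsum_Un_disjoint) auto
  moreover have "{..<N} \<union> {N..<n} = {..<n}" using n by auto
  ultimately have "(\<Sum>\<^sub>\<infinity>m\<in>{..<n}. F (x n - x m))
      = (\<Sum>\<^sub>\<infinity>m\<in>{..<N}. F (x n - x m)) + (\<Sum>\<^sub>\<infinity>m\<in>{N..<n}. F (x n - x m))"
    by simp
  also have "(\<Sum>\<^sub>\<infinity>m\<in>{..<N}. F (x n - x m)) = inv_sq_sum (\<lambda>j. x (N - 1 - int j)) (x n)"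
    using N[of "N - 1"] N[of n] n by (intro infsum_negative_part_eq_inv_sq_sum[OF u]) auto
  also have "(\<Sum>\<^sub>\<infinity>m\<in>{N..<n}. F (x n - x m)) = (\<Sum>s\<in>x ` {N..<n}. F (x n - s))"
    by (simp add: sum.reindex[OF inj])
  also have "x ` {N..<n} = {s \<in> x ` {N..}. s < x n}"
    using mono by (auto simp: strict_mono_less)
  finally have left_eq: "(\<Sum>\<^sub>\<infinity>m\<in>{..<n}. F (x n - x m))
      = inv_sq_sum (\<lambda>j. x (N - 1 - int j)) (x n) + (\<Sum>s\<in>{s \<in> x ` {N..}. s < x n}. F (x n - s))" .
  have "(\<Sum>\<^sub>\<infinity>m\<in>{n<..}. F (x m - x n)) = (\<Sum>\<^sub>\<infinity>s\<in>x ` {n<..}. F (s - x n))"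
    by (simp add: infsum_reindex[OF inj] o_def)
  also have "x ` {n<..} = {s \<in> x ` {N..}. x n < s}"
    using mono n by (auto simp: strict_mono_less image_iff intro: less_imp_le order.trans)
  finally show ?thesis using sum_eq left_eq by (simp add: net_pull_def)
qed

lemma equilibrium_negative_part_inv_sq_sum:
  fixes x :: "int \<Rightarrow> real"
  assumes ud: "uniformly_discrete x" and W: "W = {r. \<exists>n. r = x n \<and> x n \<ge> 0}"
    and eq: "\<forall>n. x n \<in> W \<longrightarrow> in_equilibrium F x n"
  obtains c u where "decreasing_by c u" "u 0 < 0" "{r. \<exists>n. r = x n \<and> x n < 0} = range u"
    "\<And>r. r \<in> W \<Longrightarrow> inv_sq_sum u r = net_pull W r"
proof -
  obtain c where mono: "strict_mono x" and c: "0 < c" and gap: "\<And>n. c \<le> x n - x (n - 1)"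
    using ud by (auto simp: uniformly_discrete_def configuration_def)
  obtain N where N: "\<And>n. 0 \<le> x n \<longleftrightarrow> N \<le> n"
    using uniformly_discrete_threshold[OF ud] by blast
  have W_eq: "W = x ` {N..}" using W nonnegative_part_eq_image[OF N] by simp
  have u: "decreasing_by c (\<lambda>j. x (N - 1 - int j))"
    by (rule decreasing_by_negative_part[of c x, OF c gap])
  show ?thesis
  proof (rule that[OF u])
    show "x (N - 1 - int 0) < 0" using N[of "N - 1"] by simp
    show "{r. \<exists>n. r = x n \<and> x n < 0} = range (\<lambda>j. x (N - 1 - int j))"
      by (rule negative_part_eq_range[OF N])
    fix r assume "r \<in> W"
    then obtain n where "r = x n" "N \<le> n" using W_eq by auto
    then show "inv_sq_sum (\<lambda>j. x (N - 1 - int j)) r = net_pull W r"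
      using equilibrium_imp_inv_sq_sum_eq_net_pull[OF mono N u] eq W_eq by auto
  qed
qed

lemma uniformly_discrete_nonnegative_part_enumeration:
  fixes x :: "int \<Rightarrow> real"
  assumes ud: "uniformly_discrete x" and W: "W = {r. \<exists>n. r = x n \<and> x n \<ge> 0}"
  obtains w C where "W = range w" "strict_mono w" "0 \<le> w 0" "\<And>k. w (Suc k) \<le> w k + C"
proof -
  obtain C where mono: "strict_mono x" and gap: "\<And>n. x n - x (n - 1) \<le> C"
    using ud by (auto simp: uniformly_discrete_def configuration_def)
  obtain N where N: "\<And>n. 0 \<le> x n \<longleftrightarrow> N \<le> n"
    using uniformly_discrete_threshold[OF ud] by blast
  show ?thesis
  proof (rule that)
    have "x n \<in> range (\<lambda>k. x (N + int k))" if "N \<le> n" for n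
      using that by (intro range_eqI[of _ _ "nat (n - N)"]) simp
    then show "W = range (\<lambda>k. x (N + int k))"
      using W nonnegative_part_eq_image[OF N] by auto
    show "strict_mono (\<lambda>k. x (N + int k))"
      using mono by (simp add: strict_mono_def)
    show "0 \<le> x (N + int 0)" using N by simp
    show "x (N + int (Suc k)) \<le> x (N + int k) + C" for k
      using gap[of "N + int (Suc k)"] by (simp add: algebra_simps)
  qed
qed

theorem mainTheorem4:
  fixes x y :: "int \<Rightarrow> real" and W :: "real set"
  assumes "uniformly_discrete x" and "uniformly_discrete y"
    and "W = {r. \<exists>n. r = x n \<and> x n \<ge> 0}"
    and "W = {r. \<exists>n. r = y n \<and> y n \<ge> 0}"
    and "\<forall>n. x n \<in> W \<longrightarrow> in_equilibrium F x n"
    and "\<forall>n. y n \<in> W \<longrightarrow> in_equilibrium F y n"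
  shows "{r. \<exists>n. r = x n \<and> x n < 0} = {r. \<exists>n. r = y n \<and> y n < 0}"
proof -
  obtain cu u where u: "decreasing_by cu u" "u 0 < 0" "{r. \<exists>n. r = x n \<and> x n < 0} = range u"
      "\<And>r. r \<in> W \<Longrightarrow> inv_sq_sum u r = net_pull W r"
    using equilibrium_negative_part_inv_sq_sum[OF assms(1,3,5)] by blast
  obtain cv v where v: "decreasing_by cv v" "v 0 < 0" "{r. \<exists>n. r = y n \<and> y n < 0} = range v"
      "\<And>r. r \<in> W \<Longrightarrow> inv_sq_sum v r = net_pull W r"
    using equilibrium_negative_part_inv_sq_sum[OF assms(2,4,6)] by blast
  obtain w C where w: "W = range w" "strict_mono w" "0 \<le> w 0" "\<And>k. w (Suc k) \<le> w k + C"
    using uniformly_discrete_nonnegative_part_enumeration[OF assms(1,3)] by blast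
  have "inv_sq_sum u (w k) = inv_sq_sum v (w k)" for k
    using u(4) v(4) w(1) by simp
  then have "u = v"
    by (rule inv_sq_sum_eq_imp_eq[where w = w, OF u(1) v(1) u(2) v(2) w(2-4)])
  with u(3) v(3) show ?thesis by simp
qed
end
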